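(* Let $\mathcal{M}\subset\mathbb{R}^n$ be a locally symmetric $C^2$ submanifold, $\sigma\in\Sigma^n$ and $\bar x\in\mathcal{M}\cap\Delta(\sigma)$. Then $\mathrm{Proj}_{\Delta(\sigma)^{\perp\perp}}(T_{\mathcal{M}}(\bar x))=T_{\mathcal{M}}(\bar x)\cap\Delta(\sigma)^{\perp\perp}$, and consequently $$T_{\mathcal{M}}(\bar x)=(T_{\mathcal{M}}(\bar x)\cap\Delta(\sigma)^{\perp\perp})\oplus(T_{\mathcal{M}}(\bar x)\cap\Delta(\sigma)^{\perp}),\qquad N_{\mathcal{M}}(\bar x)=(N_{\mathcal{M}}(\bar x)\cap\Delta(\sigma)^{\perp\perp})\oplus(N_{\mathcal{M}}(\bar x)\cap\Delta(\sigma)^{\perp}).$$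
   Context: $\Sigma^n$ permutations of $\mathbb{N}_n$ acting by $(\sigma x)_i=x_{\sigma^{-1}(i)}$; $P(\sigma)$ partition into orbits of $\sigma$; $P(x)$ partition by equal coordinates; $\Delta(\sigma)=\{x:P(x)=P(\sigma)\}$; $\Delta(\sigma)^{\perp\perp}=\{x:x_i=x_j$ whenever $i,j$ lie in the same set of $P(\sigma)\}$ and $\Delta(\sigma)^{\perp}=\{x:\sum_{j\in I}x_j=0$ for every $I\in P(\sigma)\}$ (its orthogonal complement). $\mathbb{R}^n_\ge=\{x:x_1\ge\cdots\ge x_n\}$; $B$ open ball. A set $S$ is locally symmetric if $S\cap\mathbb{R}^n_\ge\ne\emptyset$ and each $x\in S$ has $\delta>0$ with $\sigma(S\cap B(x,\delta))=S\cap B(x,\delta)$ for all $y\in S\cap B(x,\delta)$, all $\sigma$ with $\sigma y=y$; a locally symmetric $C^2$ submanifold is a connected $C^2$ submanifold without boundary that is locally symmetric. $T_{\mathcal{M}}(\bar x)$, $N_{\mathcal{M}}(\bar x)$ are the tangent and normal spaces. *)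

theory Defs
  imports "HOL-Analysis.Analysis"
begin

text \<open>Vectors of R^n are modelled as real^'n, where the finite index type 'n carries a
linear order identifying it with {1,...,n}.\<close>

definition perm_act :: "('n::finite \<Rightarrow> 'n) \<Rightarrow> real^'n \<Rightarrow> real^'n" where
  "perm_act \<sigma> x = (\<chi> i. x $ (inv \<sigma> i))"

definition same_orbit :: "('n \<Rightarrow> 'n) \<Rightarrow> 'n \<Rightarrow> 'n \<Rightarrow> bool" where
  "same_orbit \<sigma> i j \<longleftrightarrow> (\<exists>k. (\<sigma> ^^ k) i = j)"

text \<open>Delta(sigma): P(x) = P(sigma), i.e. x_i = x_j iff i,j lie in the same orbit.\<close>
definition Delta :: "('n::finite \<Rightarrow> 'n) \<Rightarrow> (real^'n) set" where
  "Delta \<sigma> = {x. \<forall>i j. x $ i = x $ j \<longleftrightarrow> same_orbit \<sigma> i j}"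

definition Delta_perpperp :: "('n::finite \<Rightarrow> 'n) \<Rightarrow> (real^'n) set" where
  "Delta_perpperp \<sigma> = {x. \<forall>i j. same_orbit \<sigma> i j \<longrightarrow> x $ i = x $ j}"

definition Delta_perp :: "('n::finite \<Rightarrow> 'n) \<Rightarrow> (real^'n) set" where
  "Delta_perp \<sigma> = {x. \<forall>i. (\<Sum>j\<in>{j. same_orbit \<sigma> i j}. x $ j) = 0}"

definition nonincreasing_cone :: "(real^'n::{finite,linorder}) set" where
  "nonincreasing_cone = {x. \<forall>i j. i \<le> j \<longrightarrow> x $ j \<le> x $ i}"

definition locally_symmetric :: "(real^'n::{finite,linorder}) set \<Rightarrow> bool" where
  "locally_symmetric S \<longleftrightarrow> S \<inter> nonincreasing_cone \<noteq> {} \<and>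
     (\<forall>x\<in>S. \<exists>\<delta>>0. \<forall>y\<in>S \<inter> ball x \<delta>. \<forall>\<sigma>. \<sigma> permutes UNIV \<and> perm_act \<sigma> y = y \<longrightarrow>
        perm_act \<sigma> ` (S \<inter> ball x \<delta>) = S \<inter> ball x \<delta>)"

definition C2_on :: "('a::euclidean_space \<Rightarrow> 'b::euclidean_space) \<Rightarrow> 'a set \<Rightarrow> bool" where
  "C2_on f U \<longleftrightarrow> (\<exists>f' f''.
     (\<forall>x\<in>U. (f has_derivative blinfun_apply (f' x)) (at x)) \<and>
     (\<forall>x\<in>U. (f' has_derivative blinfun_apply (f'' x)) (at x)) \<and>
     continuous_on U f'')"

definition C2_submanifold :: "(real^'n::finite) set \<Rightarrow> bool" where
  "C2_submanifold M \<longleftrightarrow> (\<forall>x\<in>M. \<exists>U V (\<phi>::real^'n \<Rightarrow> real^'n) \<psi> L. open U \<and> open V \<and> x \<in> U \<and> subspace L \<and>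
      \<phi> ` U = V \<and> \<psi> ` V = U \<and> (\<forall>y\<in>U. \<psi> (\<phi> y) = y) \<and> (\<forall>z\<in>V. \<phi> (\<psi> z) = z) \<and>
      C2_on \<phi> U \<and> C2_on \<psi> V \<and> \<phi> ` (M \<inter> U) = V \<inter> L)"

definition locally_symmetric_C2_submanifold :: "(real^'n::{finite,linorder}) set \<Rightarrow> bool" where
  "locally_symmetric_C2_submanifold M \<longleftrightarrow> connected M \<and> C2_submanifold M \<and> locally_symmetric M"

definition tangent_space :: "(real^'n::finite) set \<Rightarrow> real^'n \<Rightarrow> (real^'n) set" where
  "tangent_space M x = {v. \<exists>\<gamma> e. e > 0 \<and> \<gamma> C1_differentiable_on {-e<..<e} \<and>
      \<gamma> ` {-e<..<e} \<subseteq> M \<and> \<gamma> 0 = x \<and> vector_derivative \<gamma> (at 0) = v}"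

definition mfd_normal_space :: "(real^'n::finite) set \<Rightarrow> real^'n \<Rightarrow> (real^'n) set" where
  "mfd_normal_space M x = {w. \<forall>v\<in>tangent_space M x. inner w v = 0}"

definition proj_onto :: "('a::real_inner) set \<Rightarrow> 'a \<Rightarrow> 'a" where
  "proj_onto S x = (THE p. p \<in> S \<and> (\<forall>s\<in>S. inner (x - p) s = 0))"

definition is_direct_sum :: "('a::real_vector) set \<Rightarrow> 'a set \<Rightarrow> 'a set \<Rightarrow> bool" where
  "is_direct_sum T A B \<longleftrightarrow> T = {a + b | a b. a \<in> A \<and> b \<in> B} \<and> A \<inter> B = {0}"

end

theory Submission
  imports Defs
begin

text \<open>Every permutation of coordinates fixing \<open>xbar\<close> maps \<open>M\<close> near \<open>xbar\<close> onto itself, so the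
tangent space at \<open>xbar\<close>, and with it the normal space, is invariant under the orthogonal map
\<open>perm_act \<sigma>\<close> and its inverse.  The fixed space of \<open>perm_act \<sigma>\<close> is \<open>Delta_perpperp \<sigma>\<close>, and the
orthogonal projection onto the fixed space of an orthogonal map preserves every subspace invariant
under the map and its adjoint.  Hence the projection maps the tangent space onto its intersection
with \<open>Delta_perpperp \<sigma>\<close>; the residual \<open>v - P v\<close> is orthogonal to \<open>Delta_perpperp \<sigma>\<close>, hence lies in
\<open>Delta_perp \<sigma>\<close>, which gives both direct sum decompositions.  That the tangent space is a linear
space at all comes from a chart: it is the image of the flat model space under the derivative of
the inverse chart.\<close>

section \<open>Orbits of a permutation\<close>

lemma same_orbit_refl: "same_orbit \<sigma> i i"
  unfolding same_orbit_def by (rule exI[of _ 0]) simp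

lemma same_orbit_trans: "same_orbit \<sigma> i j \<Longrightarrow> same_orbit \<sigma> j k \<Longrightarrow> same_orbit \<sigma> i k"
  unfolding same_orbit_def by (metis funpow_add comp_apply)

lemma same_orbit_sym:
  assumes "\<sigma> permutes (UNIV::'n::finite set)" "same_orbit \<sigma> i j"
  shows "same_orbit \<sigma> j i"
proof -
  have "permutation \<sigma>" using assms(1) by (auto simp: permutation_permutes)
  then obtain n where n: "n > 0" "(\<sigma> ^^ n) i = i" by (rule permutation_self)
  from assms(2) obtain k where k: "(\<sigma> ^^ k) i = j" unfolding same_orbit_def by blast
  have "(\<sigma> ^^ (n * k - k)) j = (\<sigma> ^^ (n * k - k + k)) i"
    using k by (simp add: funpow_add)
  also have "\<dots> = (\<sigma> ^^ (n * k)) i" using n by simp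
  also have "\<dots> = i" using funpow_mod_eq[where f = \<sigma> and n = n and x = i and m = "n * k"] n by simp
  finally show ?thesis unfolding same_orbit_def by blast
qed

section \<open>The permutation action and the spaces \<open>Delta\<close>\<close>

lemma linear_perm_act: "linear (perm_act \<sigma>)"
  by (rule linearI) (simp_all add: perm_act_def vec_eq_iff)

lemma bounded_linear_perm_act: "bounded_linear (perm_act \<sigma> :: real^'n::finite \<Rightarrow> real^'n)"
  using linear_perm_act linear_conv_bounded_linear by blast

lemma perm_act_inv_perm_act:
  assumes "\<sigma> permutes (UNIV::'n::finite set)"
  shows "perm_act (inv \<sigma>) (perm_act \<sigma> x) = x"
  using assms by (simp add: perm_act_def vec_eq_iff inv_inv_eq permutes_bij permutes_inverses)

lemma inner_perm_act:
  assumes "\<sigma> permutes (UNIV::'n::finite set)"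
  shows "inner (perm_act \<sigma> x) y = inner x (perm_act (inv \<sigma>) y)"
proof -
  have "inner (perm_act \<sigma> x) y = (\<Sum>i\<in>UNIV. x $ (inv \<sigma> i) * y $ i)"
    by (simp add: perm_act_def inner_vec_def)
  also have "\<dots> = (\<Sum>j\<in>UNIV. x $ (inv \<sigma> (\<sigma> j)) * y $ (\<sigma> j))"
    using assms by (subst sum.reindex[symmetric, unfolded comp_def])
      (simp_all add: permutes_inj permutes_image)
  also have "\<dots> = inner x (perm_act (inv \<sigma>) y)"
    using assms by (simp add: perm_act_def inner_vec_def inv_inv_eq permutes_bij permutes_inverses)
  finally show ?thesis .
qed

definition perm_invariant :: "('n::finite \<Rightarrow> 'n) \<Rightarrow> (real^'n) set \<Rightarrow> bool" where
  "perm_invariant \<sigma> S \<longleftrightarrow> perm_act \<sigma> ` S \<subseteq> S \<and> perm_act (inv \<sigma>) ` S \<subseteq> S"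

lemma Delta_perpperp_eq_fixed_points:
  assumes "\<sigma> permutes (UNIV::'n::finite set)"
  shows "Delta_perpperp \<sigma> = {x. perm_act \<sigma> x = x}"
proof (intro set_eqI iffI; simp)
  fix x :: "real^'n"
  assume "x \<in> Delta_perpperp \<sigma>"
  moreover have "same_orbit \<sigma> (inv \<sigma> i) i" for i
    unfolding same_orbit_def using assms by (intro exI[of _ 1]) (simp add: permutes_inverses)
  ultimately show "perm_act \<sigma> x = x"
    unfolding Delta_perpperp_def perm_act_def by (simp add: vec_eq_iff)
next
  fix x :: "real^'n"
  assume "perm_act \<sigma> x = x"
  then have "x $ (inv \<sigma> i) = x $ i" for i
    unfolding perm_act_def by (metis vec_lambda_beta)
  then have "x $ (\<sigma> j) = x $ j" for j
    using assms by (metis permutes_inverses(2))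
  then have "x $ ((\<sigma> ^^ k) i) = x $ i" for k i
    by (induction k) simp_all
  then show "x \<in> Delta_perpperp \<sigma>"
    unfolding Delta_perpperp_def same_orbit_def by auto
qed

lemma Delta_subset_Delta_perpperp: "Delta \<sigma> \<subseteq> Delta_perpperp \<sigma>"
  unfolding Delta_def Delta_perpperp_def by blast

lemma orbit_indicator_in_Delta_perpperp:
  assumes "\<sigma> permutes (UNIV::'n::finite set)"
  shows "((\<chi> j. if same_orbit \<sigma> i j then 1 else 0) :: real^'n) \<in> Delta_perpperp \<sigma>"
proof -
  have "same_orbit \<sigma> i j \<longleftrightarrow> same_orbit \<sigma> i k" if "same_orbit \<sigma> j k" for j k
    using same_orbit_trans[of \<sigma> i j k] same_orbit_trans[of \<sigma> i k j]
      same_orbit_sym[OF assms that] that by blast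
  then show ?thesis unfolding Delta_perpperp_def by simp
qed

lemma orthogonal_Delta_perpperp_imp_Delta_perp:
  assumes \<sigma>: "\<sigma> permutes (UNIV::'n::finite set)"
    and orth: "\<And>s. s \<in> Delta_perpperp \<sigma> \<Longrightarrow> inner u s = 0"
  shows "u \<in> Delta_perp \<sigma>"
proof -
  have "(\<Sum>j\<in>{j. same_orbit \<sigma> i j}. u $ j) = 0" for i
  proof -
    have "(\<Sum>j\<in>{j. same_orbit \<sigma> i j}. u $ j)
        = (\<Sum>j\<in>UNIV. u $ j * (if same_orbit \<sigma> i j then 1 else 0))"
      using sum.inter_filter[of UNIV "\<lambda>j. u $ j" "same_orbit \<sigma> i"]
      by (simp add: if_distrib cong: if_cong)
    also have "\<dots> = inner u ((\<chi> j. if same_orbit \<sigma> i j then 1 else 0) :: real^'n)"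
      by (simp add: inner_vec_def)
    also have "\<dots> = 0" using orth orbit_indicator_in_Delta_perpperp[OF \<sigma>] by blast
    finally show ?thesis .
  qed
  then show ?thesis unfolding Delta_perp_def by simp
qed

lemma Delta_perpperp_Int_Delta_perp: "Delta_perpperp \<sigma> \<inter> Delta_perp \<sigma> = {0 :: real^'n::finite}"
proof -
  have "x = 0" if x: "x \<in> Delta_perpperp \<sigma>" "x \<in> Delta_perp \<sigma>" for x :: "real^'n"
  proof (rule vec_eq_iff[THEN iffD2], rule allI)
    fix i
    let ?O = "{j. same_orbit \<sigma> i j}"
    have "0 = (\<Sum>j\<in>?O. x $ j)" using x(2) unfolding Delta_perp_def by simp
    also have "\<dots> = (\<Sum>j\<in>?O. x $ i)"
      using x(1) unfolding Delta_perpperp_def by (intro sum.cong) auto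
    also have "\<dots> = real (card ?O) * x $ i" by simp
    finally have "real (card ?O) * x $ i = 0" ..
    moreover have "card ?O \<noteq> 0" using same_orbit_refl[of \<sigma> i] by (auto simp: card_eq_0_iff)
    ultimately show "x $ i = 0 $ i" by simp
  qed
  moreover have "(0 :: real^'n) \<in> Delta_perpperp \<sigma> \<inter> Delta_perp \<sigma>"
    by (simp add: Delta_perpperp_def Delta_perp_def)
  ultimately show ?thesis by blast
qed

section \<open>Orthogonal projection onto a subspace\<close>

lemma orthogonal_projection_ex1:
  fixes D :: "'a::euclidean_space set"
  assumes "subspace D"
  shows "\<exists>!p. p \<in> D \<and> (\<forall>s\<in>D. inner (v - p) s = 0)"
proof -
  obtain y z where yz: "y \<in> span D" "\<And>w. w \<in> span D \<Longrightarrow> orthogonal z w" "v = y + z"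
    using orthogonal_subspace_decomp_exists[of D v] by metis
  have sD: "span D = D" using assms by simp
  have y: "y \<in> D \<and> (\<forall>s\<in>D. inner (v - y) s = 0)"
    using yz unfolding sD orthogonal_def by auto
  show ?thesis
  proof (rule ex1I)
    show "y \<in> D \<and> (\<forall>s\<in>D. inner (v - y) s = 0)" by (fact y)
  next
    fix p assume p: "p \<in> D \<and> (\<forall>s\<in>D. inner (v - p) s = 0)"
    have "y - p \<in> D" using p y assms by (simp add: subspace_diff)
    then have "inner (v - p) (y - p) - inner (v - y) (y - p) = 0" using p y by simp
    then have "inner (y - p) (y - p) = 0" by (simp add: inner_diff_left)
    then show "p = y" by simp
  qed
qed

lemma proj_onto_in:
  fixes D :: "'a::euclidean_space set"
  assumes "subspace D"
  shows "proj_onto D v \<in> D"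
  using theI'[OF orthogonal_projection_ex1[OF assms]] unfolding proj_onto_def by blast

lemma proj_onto_orthogonal:
  fixes D :: "'a::euclidean_space set"
  assumes "subspace D" "s \<in> D"
  shows "inner (v - proj_onto D v) s = 0"
  using theI'[OF orthogonal_projection_ex1[OF assms(1)]] assms(2) unfolding proj_onto_def by blast

lemma proj_onto_eqI:
  fixes D :: "'a::euclidean_space set"
  assumes "subspace D" "p \<in> D" "\<And>s. s \<in> D \<Longrightarrow> inner (v - p) s = 0"
  shows "proj_onto D v = p"
  unfolding proj_onto_def using assms
  by (intro the1_equality[OF orthogonal_projection_ex1[OF assms(1)]]) blast

lemma subspace_fixed_points: "linear f \<Longrightarrow> subspace {x. f x = x}"
  unfolding subspace_def by (simp add: linear_0 linear_add linear_scale)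

text \<open>Write \<open>P v = a + b\<close> with \<open>a \<in> S\<close> and \<open>b \<bottom> S\<close>.  Since \<open>f\<close> fixes \<open>P v\<close>,
\<open>f a - a = b - f b\<close> lies in \<open>S\<close> and (thanks to the adjoint \<open>g\<close>) in its orthogonal complement,
so \<open>b\<close> is fixed by \<open>f\<close>; then \<open>b\<close> is orthogonal to \<open>v - P v\<close>, to \<open>v\<close> and to \<open>a\<close>,
hence to itself.\<close>
lemma proj_onto_fixed_points_mem_invariant_subspace:
  fixes f g :: "'a::euclidean_space \<Rightarrow> 'a"
  assumes f: "linear f" and adj: "\<And>x y. inner (f x) y = inner x (g y)"
    and S: "subspace S" and fS: "\<And>v. v \<in> S \<Longrightarrow> f v \<in> S" and gS: "\<And>v. v \<in> S \<Longrightarrow> g v \<in> S"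
    and v: "v \<in> S"
  shows "proj_onto {x. f x = x} v \<in> S"
proof -
  let ?D = "{x. f x = x}"
  let ?p = "proj_onto ?D v"
  have D: "subspace ?D" by (rule subspace_fixed_points[OF f])
  obtain a b where ab: "a \<in> span S" "\<And>w. w \<in> span S \<Longrightarrow> orthogonal b w" "?p = a + b"
    using orthogonal_subspace_decomp_exists[of S ?p] by metis
  have sS: "span S = S" using S by simp
  have a: "a \<in> S" and b: "\<And>w. w \<in> S \<Longrightarrow> inner b w = 0"
    using ab unfolding sS orthogonal_def by auto
  have fb: "\<And>w. w \<in> S \<Longrightarrow> inner (f b) w = 0" using adj b gS by simp
  have "f ?p = ?p" using proj_onto_in[OF D] by simp
  then have "f a - a = b - f b" using ab(3) f by (simp add: linear_add algebra_simps)
  moreover have "f a - a \<in> S" using a fS S by (simp add: subspace_diff)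
  ultimately have "inner (b - f b) (b - f b) = 0"
    using b fb by (metis inner_diff_left diff_zero)
  then have "b \<in> ?D" by simp
  then have "inner (v - ?p) b = 0" by (rule proj_onto_orthogonal[OF D])
  moreover have "inner v b = 0" "inner a b = 0"
    using b[OF v] b[OF a] by (simp_all add: inner_commute)
  moreover have "inner b b = inner v b - inner a b - inner (v - ?p) b"
    using ab(3) by (simp add: inner_diff_left inner_add_left)
  ultimately have "b = 0" by simp
  then show ?thesis using ab(3) a by simp
qed

section \<open>Splitting a permutation invariant subspace\<close>

lemma subspace_Delta_perpperp: "subspace (Delta_perpperp \<sigma>)"
  unfolding subspace_def Delta_perpperp_def by simp

lemma proj_onto_Delta_perpperp_mem:
  assumes \<sigma>: "\<sigma> permutes UNIV" and S: "subspace S" "perm_invariant \<sigma> S" and v: "v \<in> S"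
  shows "proj_onto (Delta_perpperp \<sigma>) v \<in> S \<inter> Delta_perpperp \<sigma>"
proof
  show "proj_onto (Delta_perpperp \<sigma>) v \<in> S"
    unfolding Delta_perpperp_eq_fixed_points[OF \<sigma>]
    by (rule proj_onto_fixed_points_mem_invariant_subspace[OF linear_perm_act
          inner_perm_act[OF \<sigma>] S(1) _ _ v])
      (use S(2) in \<open>auto simp: perm_invariant_def\<close>)
qed (rule proj_onto_in[OF subspace_Delta_perpperp])

lemma proj_onto_Delta_perpperp_image:
  assumes \<sigma>: "\<sigma> permutes UNIV" and S: "subspace S" "perm_invariant \<sigma> S"
  shows "proj_onto (Delta_perpperp \<sigma>) ` S = S \<inter> Delta_perpperp \<sigma>"
proof
  show "proj_onto (Delta_perpperp \<sigma>) ` S \<subseteq> S \<inter> Delta_perpperp \<sigma>"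
    using proj_onto_Delta_perpperp_mem[OF \<sigma> S] by blast
  show "S \<inter> Delta_perpperp \<sigma> \<subseteq> proj_onto (Delta_perpperp \<sigma>) ` S"
  proof
    fix v assume v: "v \<in> S \<inter> Delta_perpperp \<sigma>"
    then have "proj_onto (Delta_perpperp \<sigma>) v = v"
      by (intro proj_onto_eqI[OF subspace_Delta_perpperp]) auto
    then show "v \<in> proj_onto (Delta_perpperp \<sigma>) ` S" using v by (metis IntD1 image_eqI)
  qed
qed

lemma diff_proj_onto_Delta_perpperp_mem_Delta_perp:
  "\<sigma> permutes UNIV \<Longrightarrow> v - proj_onto (Delta_perpperp \<sigma>) v \<in> Delta_perp \<sigma>"
  by (rule orthogonal_Delta_perpperp_imp_Delta_perp[OF _ proj_onto_orthogonal[OF subspace_Delta_perpperp]])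

lemma is_direct_sum_Delta:
  assumes \<sigma>: "\<sigma> permutes UNIV" and S: "subspace S" "perm_invariant \<sigma> S"
  shows "is_direct_sum S (S \<inter> Delta_perpperp \<sigma>) (S \<inter> Delta_perp \<sigma>)"
  unfolding is_direct_sum_def
proof
  let ?P = "proj_onto (Delta_perpperp \<sigma>)"
  show "S = {a + b |a b. a \<in> S \<inter> Delta_perpperp \<sigma> \<and> b \<in> S \<inter> Delta_perp \<sigma>}"
  proof (intro set_eqI iffI)
    fix v assume v: "v \<in> S"
    have "?P v \<in> S \<inter> Delta_perpperp \<sigma>" by (rule proj_onto_Delta_perpperp_mem[OF \<sigma> S v])
    moreover have "v - ?P v \<in> S \<inter> Delta_perp \<sigma>"
      using calculation v S(1) diff_proj_onto_Delta_perpperp_mem_Delta_perp[OF \<sigma>]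
      by (blast intro: subspace_diff)
    ultimately show "v \<in> {a + b |a b. a \<in> S \<inter> Delta_perpperp \<sigma> \<and> b \<in> S \<inter> Delta_perp \<sigma>}"
      by (intro CollectI exI[of _ "?P v"] exI[of _ "v - ?P v"]) simp
  next
    fix v assume "v \<in> {a + b |a b. a \<in> S \<inter> Delta_perpperp \<sigma> \<and> b \<in> S \<inter> Delta_perp \<sigma>}"
    then show "v \<in> S" using S(1) by (auto intro: subspace_add)
  qed
  show "S \<inter> Delta_perpperp \<sigma> \<inter> (S \<inter> Delta_perp \<sigma>) = {0}"
    using Delta_perpperp_Int_Delta_perp[of \<sigma>] subspace_0[OF S(1)] by blast
qed

section \<open>Tangent vectors\<close>

lemma continuous_at_interval_image_subset:
  fixes c :: "real \<Rightarrow> 'a::topological_space"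
  assumes "isCont c 0" "open W" "c 0 \<in> W"
  obtains d where "d > 0" "c ` {-d<..<d} \<subseteq> W"
proof -
  have "eventually (\<lambda>t. c t \<in> W) (at 0)"
    using topological_tendstoD[OF assms[unfolded isCont_def]] .
  then obtain d where d: "d > 0" "\<And>t. t \<noteq> 0 \<Longrightarrow> dist t 0 < d \<Longrightarrow> c t \<in> W"
    unfolding eventually_at by blast
  have "c t \<in> W" if "t \<in> {-d<..<d}" for t
    using that d(2)[of t] assms(3) by (cases "t = 0") (auto simp: dist_real_def)
  with d(1) show thesis by (intro that image_subsetI)
qed

lemma tangent_space_mono: "M \<subseteq> N \<Longrightarrow> tangent_space M x \<subseteq> tangent_space N x"
  unfolding tangent_space_def by blast

lemma tangent_spaceE:
  assumes "v \<in> tangent_space M x"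
  obtains \<gamma> e where "e > 0" "\<gamma> C1_differentiable_on {-e<..<e}" "\<gamma> ` {-e<..<e} \<subseteq> M"
    "\<gamma> 0 = x" "(\<gamma> has_vector_derivative v) (at 0)"
proof -
  obtain \<gamma> e where g: "e > 0" "\<gamma> C1_differentiable_on {-e<..<e}" "\<gamma> ` {-e<..<e} \<subseteq> M"
      "\<gamma> 0 = x" "vector_derivative \<gamma> (at 0) = v"
    using assms unfolding tangent_space_def by blast
  have "\<gamma> differentiable at 0" using g(1,2) unfolding C1_differentiable_on_eq by simp
  then have "(\<gamma> has_vector_derivative v) (at 0)" using g(5) vector_derivative_works by blast
  with g show thesis by (intro that)
qed

lemma tangent_spaceI:
  assumes "e > 0" "\<gamma> C1_differentiable_on {-e<..<e}" "\<gamma> ` {-e<..<e} \<subseteq> M"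
    "\<gamma> 0 = x" "(\<gamma> has_vector_derivative v) (at 0)"
  shows "v \<in> tangent_space M x"
  unfolding tangent_space_def using assms vector_derivative_at by blast

lemma tangent_space_Int_open:
  assumes v: "v \<in> tangent_space M x" and W: "open W" "x \<in> W"
  shows "v \<in> tangent_space (M \<inter> W) x"
proof -
  obtain \<gamma> e where g: "e > 0" "\<gamma> C1_differentiable_on {-e<..<e}" "\<gamma> ` {-e<..<e} \<subseteq> M"
      "\<gamma> 0 = x" "(\<gamma> has_vector_derivative v) (at 0)"
    using v by (rule tangent_spaceE)
  obtain d where d: "d > 0" "\<gamma> ` {-d<..<d} \<subseteq> W"
    using has_vector_derivative_continuous[OF g(5)] W(1)
    by (rule continuous_at_interval_image_subset) (simp add: g(4) W(2))
  let ?e = "min e d"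
  show ?thesis
  proof (rule tangent_spaceI[of ?e])
    show "\<gamma> C1_differentiable_on {-?e<..<?e}" using g(2) by (rule C1_differentiable_on_subset) auto
    show "\<gamma> ` {-?e<..<?e} \<subseteq> M \<inter> W" using g(3) d(2) by (auto simp: image_subset_iff)
  qed (use g d in auto)
qed

lemma tangent_space_linear_image:
  assumes f: "bounded_linear f" and v: "v \<in> tangent_space M x"
  shows "f v \<in> tangent_space (f ` M) (f x)"
proof -
  obtain \<gamma> e where g: "e > 0" "\<gamma> C1_differentiable_on {-e<..<e}" "\<gamma> ` {-e<..<e} \<subseteq> M"
      "\<gamma> 0 = x" "(\<gamma> has_vector_derivative v) (at 0)"
    using v by (rule tangent_spaceE)
  obtain D where D: "\<And>t. t \<in> {-e<..<e} \<Longrightarrow> (\<gamma> has_vector_derivative D t) (at t)"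
      "continuous_on {-e<..<e} D"
    using g(2) unfolding C1_differentiable_on_def by blast
  have "(f \<circ> \<gamma>) C1_differentiable_on {-e<..<e}"
    unfolding C1_differentiable_on_def
  proof (intro exI[of _ "\<lambda>t. f (D t)"] conjI ballI)
    fix t :: real assume "t \<in> {-e<..<e}"
    then show "((f \<circ> \<gamma>) has_vector_derivative f (D t)) (at t)"
      unfolding comp_def by (rule bounded_linear.has_vector_derivative[OF f D(1)])
  next
    show "continuous_on {-e<..<e} (\<lambda>t. f (D t))"
      by (rule linear_continuous_on_compose[OF D(2) bounded_linear.linear[OF f]])
  qed
  moreover have "((f \<circ> \<gamma>) has_vector_derivative f v) (at 0)"
    unfolding comp_def by (rule bounded_linear.has_vector_derivative[OF f g(5)])
  ultimately show ?thesis
    using g by (intro tangent_spaceI[of e]) (auto simp: image_comp[symmetric])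
qed

lemma has_vector_derivative_in_subspace:
  fixes c :: "real \<Rightarrow> 'a::euclidean_space"
  assumes d: "(c has_vector_derivative w) (at 0)" and L: "subspace L"
    and W: "open W" "0 \<in> W" and cL: "\<And>t. t \<in> W \<Longrightarrow> c t \<in> L"
  shows "w \<in> L"
proof -
  have orth: "inner u w = 0" if u: "\<And>l. l \<in> L \<Longrightarrow> inner u l = 0" for u
  proof -
    have "((\<lambda>t. inner u (c t)) has_derivative (\<lambda>t. inner u (t *\<^sub>R w))) (at 0)"
      using bounded_linear.has_derivative[OF bounded_linear_inner_right
          d[unfolded has_vector_derivative_def]] .
    moreover have "((\<lambda>t. inner u (c t)) has_derivative (\<lambda>t. 0)) (at 0)"
      by (rule has_derivative_transform_within_open[OF has_derivative_const W]) (simp add: u cL)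
    ultimately have "(\<lambda>t. inner u (t *\<^sub>R w)) = (\<lambda>t. 0)" by (rule has_derivative_unique)
    then show ?thesis by (metis scaleR_one)
  qed
  obtain y z where yz: "y \<in> span L" "\<And>l. l \<in> span L \<Longrightarrow> orthogonal z l" "w = y + z"
    using orthogonal_subspace_decomp_exists[of L w] by metis
  have sL: "span L = L" using L by simp
  have "inner z w = 0" using orth[of z] yz unfolding sL orthogonal_def by blast
  moreover have "inner z y = 0" using yz unfolding sL orthogonal_def by blast
  ultimately have "inner z z = 0" using yz(3) by (simp add: inner_add_right)
  then show ?thesis using yz unfolding sL by simp
qed

lemma tangent_space_chart_derivative:
  fixes \<phi> :: "real^'n::finite \<Rightarrow> 'a::euclidean_space"
  assumes v: "v \<in> tangent_space M x" and U: "open U" "x \<in> U" and L: "subspace L"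
    and \<phi>L: "\<phi> ` (M \<inter> U) \<subseteq> L" and \<phi>': "(\<phi> has_derivative \<phi>') (at x)"
  shows "\<phi>' v \<in> L"
proof -
  obtain \<gamma> e where g: "e > 0" "\<gamma> ` {-e<..<e} \<subseteq> M \<inter> U" "\<gamma> 0 = x"
      "(\<gamma> has_vector_derivative v) (at 0)"
    using tangent_space_Int_open[OF v U] by (rule tangent_spaceE)
  have "(\<phi> has_derivative \<phi>') (at (\<gamma> 0) within range \<gamma>)"
    using \<phi>' g(3) by (simp add: has_derivative_at_withinI)
  then have "((\<phi> \<circ> \<gamma>) has_vector_derivative \<phi>' v) (at 0)"
    by (rule vector_derivative_diff_chain_within[OF g(4)])
  then show ?thesis
    by (rule has_vector_derivative_in_subspace[where W = "{-e<..<e}"]) (use g \<phi>L L in \<open>auto simp: image_subset_iff\<close>)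
qed

lemma tangent_space_chart_inverse:
  fixes \<psi> :: "'a::euclidean_space \<Rightarrow> real^'n::finite"
  assumes V: "open V" "p \<in> V" and L: "subspace L" "p \<in> L" "w \<in> L"
    and \<psi>': "\<And>z. z \<in> V \<Longrightarrow> (\<psi> has_derivative blinfun_apply (\<psi>' z)) (at z)"
    and cont: "continuous_on V \<psi>'"
  shows "\<psi>' p w \<in> tangent_space (\<psi> ` (V \<inter> L)) (\<psi> p)"
proof -
  let ?c = "\<lambda>t::real. p + t *\<^sub>R w"
  have "isCont ?c 0" by (intro continuous_intros)
  then obtain e where e: "e > 0" "?c ` {-e<..<e} \<subseteq> V"
    using V(1) by (rule continuous_at_interval_image_subset) (simp add: V(2))
  have cL: "?c t \<in> L" for t using L by (simp add: subspace_add subspace_scale)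
  have der: "((\<psi> \<circ> ?c) has_vector_derivative \<psi>' (?c t) w) (at t)" if "t \<in> {-e<..<e}" for t
  proof -
    have "?c t \<in> V" using e(2) that by blast
    then have "(\<psi> has_derivative \<psi>' (?c t)) (at (?c t) within range ?c)"
      using \<psi>' by (simp add: has_derivative_at_withinI)
    moreover have "(?c has_vector_derivative w) (at t)" by (auto intro!: derivative_eq_intros)
    ultimately show ?thesis using vector_derivative_diff_chain_within by blast
  qed
  have "continuous_on {-e<..<e} ?c" by (intro continuous_intros)
  then have "continuous_on {-e<..<e} (\<lambda>t. \<psi>' (?c t))"
    by (rule continuous_on_compose2[OF cont _ e(2)])
  then have "continuous_on {-e<..<e} (\<lambda>t. \<psi>' (?c t) w)"
    by (rule blinfun.continuous_on[OF _ continuous_on_const])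
  then have "(\<psi> \<circ> ?c) C1_differentiable_on {-e<..<e}"
    unfolding C1_differentiable_on_def using der by (intro exI[of _ "\<lambda>t. \<psi>' (?c t) w"]) blast
  moreover have "(\<psi> \<circ> ?c) ` {-e<..<e} \<subseteq> \<psi> ` (V \<inter> L)" using e(2) cL by auto
  ultimately show ?thesis
    using e(1) der[of 0] by (intro tangent_spaceI[of e]) auto
qed

lemma has_derivative_left_inverse:
  assumes \<phi>: "(\<phi> has_derivative \<phi>') (at x)" and \<psi>: "(\<psi> has_derivative \<psi>') (at (\<phi> x))"
    and U: "open U" "x \<in> U" and inv: "\<And>y. y \<in> U \<Longrightarrow> \<psi> (\<phi> y) = y"
  shows "\<psi>' (\<phi>' h) = h"
proof -
  have "((\<psi> \<circ> \<phi>) has_derivative (\<psi>' \<circ> \<phi>')) (at x)"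
    by (rule diff_chain_at[OF \<phi> \<psi>])
  moreover have "((\<psi> \<circ> \<phi>) has_derivative id) (at x)"
    by (rule has_derivative_transform_within_open[OF has_derivative_id U]) (simp add: inv)
  ultimately have "\<psi>' \<circ> \<phi>' = id" by (rule has_derivative_unique)
  then show ?thesis by (metis comp_apply id_apply)
qed

lemma tangent_space_eq_chart_image:
  fixes M :: "(real^'n::finite) set" and \<phi> :: "real^'n \<Rightarrow> 'a::euclidean_space"
  assumes U: "open U" "x \<in> U" "x \<in> M" and V: "open V" and L: "subspace L"
    and chart: "\<phi> ` (M \<inter> U) = V \<inter> L" "\<And>y. y \<in> U \<Longrightarrow> \<psi> (\<phi> y) = y"
    and \<phi>': "(\<phi> has_derivative \<phi>') (at x)"
    and \<psi>': "\<And>z. z \<in> V \<Longrightarrow> (\<psi> has_derivative blinfun_apply (\<psi>' z)) (at z)"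
    and cont: "continuous_on V \<psi>'"
  shows "tangent_space M x = blinfun_apply (\<psi>' (\<phi> x)) ` L"
proof
  have p: "\<phi> x \<in> V" "\<phi> x \<in> L" "\<psi> (\<phi> x) = x" using U chart by blast+
  show "tangent_space M x \<subseteq> blinfun_apply (\<psi>' (\<phi> x)) ` L"
  proof
    fix v assume "v \<in> tangent_space M x"
    then have "\<phi>' v \<in> L"
      by (rule tangent_space_chart_derivative[OF _ U(1,2) L _ \<phi>']) (use chart(1) in blast)
    moreover have "\<psi>' (\<phi> x) (\<phi>' v) = v"
      by (rule has_derivative_left_inverse[OF \<phi>' \<psi>'[OF p(1)] U(1,2) chart(2)])
    ultimately show "v \<in> blinfun_apply (\<psi>' (\<phi> x)) ` L" by (metis image_eqI)
  qed
  have \<psi>VL: "\<psi> ` (V \<inter> L) = M \<inter> U"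
    unfolding chart(1)[symmetric] image_image using chart(2) by force
  show "blinfun_apply (\<psi>' (\<phi> x)) ` L \<subseteq> tangent_space M x"
  proof
    fix u assume "u \<in> blinfun_apply (\<psi>' (\<phi> x)) ` L"
    then obtain w where w: "w \<in> L" "u = \<psi>' (\<phi> x) w" by blast
    have "u \<in> tangent_space (\<psi> ` (V \<inter> L)) (\<psi> (\<phi> x))"
      unfolding w(2) by (rule tangent_space_chart_inverse[OF V p(1) L p(2) w(1) \<psi>' cont])
    then show "u \<in> tangent_space M x"
      unfolding \<psi>VL p(3) using tangent_space_mono[of "M \<inter> U" M x] by blast
  qed
qed

lemma subspace_tangent_space:
  fixes M :: "(real^'n::finite) set"
  assumes M: "C2_submanifold M" and x: "x \<in> M"
  shows "subspace (tangent_space M x)"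
proof -
  obtain U V L and \<phi> \<psi> :: "real^'n \<Rightarrow> real^'n" where
    chart: "open U" "open V" "x \<in> U" "subspace L" "\<forall>y\<in>U. \<psi> (\<phi> y) = y"
      "C2_on \<phi> U" "C2_on \<psi> V" "\<phi> ` (M \<inter> U) = V \<inter> L"
    using bspec[OF M[unfolded C2_submanifold_def] x] by (elim exE conjE) (rule that; assumption)
  obtain \<phi>' where \<phi>': "\<forall>y\<in>U. (\<phi> has_derivative blinfun_apply (\<phi>' y)) (at y)"
    using chart(6) unfolding C2_on_def by blast
  obtain \<psi>' \<psi>'' where \<psi>': "\<forall>z\<in>V. (\<psi> has_derivative blinfun_apply (\<psi>' z)) (at z)"
      and \<psi>'': "\<forall>z\<in>V. (\<psi>' has_derivative blinfun_apply (\<psi>'' z)) (at z)"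
    using chart(7) unfolding C2_on_def by blast
  have cont: "continuous_on V \<psi>'"
    by (rule continuous_at_imp_continuous_on) (use \<psi>'' in \<open>blast intro: has_derivative_continuous\<close>)
  have "tangent_space M x = blinfun_apply (\<psi>' (\<phi> x)) ` L"
    by (rule tangent_space_eq_chart_image[where \<psi> = \<psi>,
          OF chart(1,3) x chart(2,4,8) _ \<phi>'[rule_format, OF chart(3)] _ cont])
      (simp_all add: chart(5) \<psi>')
  then show ?thesis
    using linear_subspace_image[OF bounded_linear.linear[OF blinfun.bounded_linear_right] chart(4)]
    by simp
qed

section \<open>Symmetry of the tangent and normal spaces\<close>

lemma tangent_space_perm_invariant:
  fixes M :: "(real^'n::{finite,linorder}) set"
  assumes M: "locally_symmetric M" "x \<in> M" and \<tau>: "\<tau> permutes UNIV" "perm_act \<tau> x = x"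
    and v: "v \<in> tangent_space M x"
  shows "perm_act \<tau> v \<in> tangent_space M x"
proof -
  obtain \<delta> where \<delta>: "\<delta> > 0" "\<forall>y\<in>M \<inter> ball x \<delta>. \<forall>\<sigma>. \<sigma> permutes UNIV \<and> perm_act \<sigma> y = y \<longrightarrow>
      perm_act \<sigma> ` (M \<inter> ball x \<delta>) = M \<inter> ball x \<delta>"
    using bspec[OF conjunct2[OF M(1)[unfolded locally_symmetric_def]] M(2)] by blast
  have sym: "perm_act \<tau> ` (M \<inter> ball x \<delta>) = M \<inter> ball x \<delta>"
    using \<delta>(2)[rule_format, of x \<tau>] \<delta>(1) M(2) \<tau> by simp
  have "v \<in> tangent_space (M \<inter> ball x \<delta>) x"
    using tangent_space_Int_open[OF v] \<delta>(1) by simp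
  then have "perm_act \<tau> v \<in> tangent_space (perm_act \<tau> ` (M \<inter> ball x \<delta>)) (perm_act \<tau> x)"
    by (rule tangent_space_linear_image[OF bounded_linear_perm_act])
  then show ?thesis
    using tangent_space_mono[of "M \<inter> ball x \<delta>" M x] unfolding sym \<tau>(2) by blast
qed

lemma perm_invariant_tangent_space:
  fixes M :: "(real^'n::{finite,linorder}) set"
  assumes "locally_symmetric M" "x \<in> M" "\<sigma> permutes UNIV" "perm_act \<sigma> x = x"
  shows "perm_invariant \<sigma> (tangent_space M x)"
proof -
  have "perm_act (inv \<sigma>) x = x" using assms(3,4) perm_act_inv_perm_act by metis
  then show ?thesis
    unfolding perm_invariant_def
    using tangent_space_perm_invariant[OF assms(1,2)] assms(3,4) permutes_inv[OF assms(3)] by blast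
qed

lemma subspace_mfd_normal_space: "subspace (mfd_normal_space M x)"
  unfolding subspace_def mfd_normal_space_def by (simp add: inner_add_left)

lemma perm_invariant_mfd_normal_space:
  assumes \<sigma>: "\<sigma> permutes UNIV" and T: "perm_invariant \<sigma> (tangent_space M x)"
  shows "perm_invariant \<sigma> (mfd_normal_space M x)"
proof -
  have "inv (inv \<sigma>) = \<sigma>" using \<sigma> by (simp add: inv_inv_eq permutes_bij)
  then show ?thesis
    using T inner_perm_act[OF \<sigma>] inner_perm_act[OF permutes_inv[OF \<sigma>]]
    unfolding perm_invariant_def mfd_normal_space_def by (auto simp: image_subset_iff)
qed

theorem proposition3p15:
  fixes M :: "(real, 'n::{finite,linorder}) vec set" and \<sigma> :: "'n \<Rightarrow> 'n" and xbar :: "(real, 'n) vec"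
  assumes "locally_symmetric_C2_submanifold M"
    and "\<sigma> permutes UNIV"
    and "xbar \<in> M \<inter> Delta \<sigma>"
  shows "proj_onto (Delta_perpperp \<sigma>) ` tangent_space M xbar
           = tangent_space M xbar \<inter> Delta_perpperp \<sigma>
     \<and> is_direct_sum (tangent_space M xbar)
           (tangent_space M xbar \<inter> Delta_perpperp \<sigma>) (tangent_space M xbar \<inter> Delta_perp \<sigma>)
     \<and> is_direct_sum (mfd_normal_space M xbar)
           (mfd_normal_space M xbar \<inter> Delta_perpperp \<sigma>) (mfd_normal_space M xbar \<inter> Delta_perp \<sigma>)"
proof -
  have M: "C2_submanifold M" "locally_symmetric M" "xbar \<in> M"
    using assms(1,3) unfolding locally_symmetric_C2_submanifold_def by auto
  have "perm_act \<sigma> xbar = xbar"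
    using assms(3) Delta_subset_Delta_perpperp Delta_perpperp_eq_fixed_points[OF assms(2)] by blast
  then have T: "perm_invariant \<sigma> (tangent_space M xbar)"
    by (rule perm_invariant_tangent_space[OF M(2,3) assms(2)])
  have N: "perm_invariant \<sigma> (mfd_normal_space M xbar)"
    by (rule perm_invariant_mfd_normal_space[OF assms(2) T])
  show ?thesis
    using proj_onto_Delta_perpperp_image[OF assms(2) subspace_tangent_space[OF M(1,3)] T]
      is_direct_sum_Delta[OF assms(2) subspace_tangent_space[OF M(1,3)] T]
      is_direct_sum_Delta[OF assms(2) subspace_mfd_normal_space N]
    by blast
qed

end
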